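(* A metrizable topological space $X$ is separable if and only if $C(X)$ has the countable sup property.
   Context: $C(X)$ is the vector lattice of all real-valued continuous functions on $X$ with the pointwise order. A vector lattice has the countable sup property if every nonempty subset possessing a supremum contains a countable subset with the same supremum. *)

theory Defs
  imports "HOL-Analysis.Analysis"
begin

text \<open>Functions are identified with
  their restriction to the topspace by requiring them to vanish outside it, so that
  the pointwise order on functions is exactly the pointwise order on X.\<close>
definition cont_funs :: "'a topology \<Rightarrow> ('a \<Rightarrow> real) set" where
  "cont_funs X = {f. continuous_map X euclideanreal f \<and> (\<forall>x. x \<notin> topspace X \<longrightarrow> f x = 0)}"

definition is_sup_in :: "'b::order set \<Rightarrow> 'b set \<Rightarrow> 'b \<Rightarrow> bool" where
  "is_sup_in L S s \<longleftrightarrow> s \<in> L \<and> (\<forall>f\<in>S. f \<le> s) \<and> (\<forall>u\<in>L. (\<forall>f\<in>S. f \<le> u) \<longrightarrow> s \<le> u)"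

definition countable_sup_property :: "'b::order set \<Rightarrow> bool" where
  "countable_sup_property L \<longleftrightarrow>
     (\<forall>S. S \<subseteq> L \<and> S \<noteq> {} \<longrightarrow>
        (\<forall>s. is_sup_in L S s \<longrightarrow> (\<exists>T. T \<subseteq> S \<and> countable T \<and> is_sup_in L T s)))"

end

theory Submission
  imports Defs
begin

text \<open>If X has a countable base, every family S of continuous functions has a countable
  subfamily with the same continuous upper bounds: for each basic open set V and rational q
  keep one member of S that exceeds q somewhere on V. Separable metric spaces are second
  countable, which gives one direction. Conversely, if X is not separable there is e > 0 such
  that no countable set is e-dense. The tents max 0 (1 - d(-,a)/e), a in X, have supremum 1
  in C(X); but for countably many centres a and a point p at distance at least e from all of
  them, 1 minus the tent at p is a continuous upper bound of those tents that vanishes at p.\<close>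

lemma restrict_in_cont_funs:
  assumes "continuous_map X euclideanreal g"
  shows "(\<lambda>x. if x \<in> topspace X then g x else 0) \<in> cont_funs X"
  unfolding cont_funs_def
  using continuous_map_eq[OF assms] by auto

lemma cont_funs_le_iff:
  assumes "f \<in> cont_funs X" "u \<in> cont_funs X"
  shows "f \<le> u \<longleftrightarrow> (\<forall>x\<in>topspace X. f x \<le> u x)"
  using assms unfolding cont_funs_def le_fun_def by auto

lemma is_sup_in_subset:
  assumes "is_sup_in L S s" "T \<subseteq> S"
    and "\<And>u. u \<in> L \<Longrightarrow> \<forall>f\<in>T. f \<le> u \<Longrightarrow> \<forall>f\<in>S. f \<le> u"
  shows "is_sup_in L T s"
  using assms unfolding is_sup_in_def by blast

lemma countable_sup_propertyD:
  assumes "countable_sup_property L" "S \<subseteq> L" "S \<noteq> {}" "is_sup_in L S s"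
  obtains T where "T \<subseteq> S" "countable T" "is_sup_in L T s"
  using assms unfolding countable_sup_property_def by blast

lemma second_countable_countable_dominating_subset:
  assumes "second_countable X" "S \<subseteq> cont_funs X"
  obtains T where "T \<subseteq> S" "countable T"
    "\<And>u. u \<in> cont_funs X \<Longrightarrow> \<forall>f\<in>T. f \<le> u \<Longrightarrow> \<forall>f\<in>S. f \<le> u"
proof -
  obtain \<B> where "countable \<B>"
    and \<B>_base: "\<And>U x. openin X U \<Longrightarrow> x \<in> U \<Longrightarrow> \<exists>V\<in>\<B>. x \<in> V \<and> V \<subseteq> U"
    using assms(1) unfolding second_countable_def by metis
  define I where "I = {(V, q). V \<in> \<B> \<and> q \<in> \<rat> \<and> (\<exists>f\<in>S. \<exists>y\<in>V. q < f y)}"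
  have "\<forall>i\<in>I. \<exists>f. f \<in> S \<and> (\<exists>y\<in>fst i. snd i < f y)"
    unfolding I_def by auto
  then obtain g where g: "\<And>i. i \<in> I \<Longrightarrow> g i \<in> S \<and> (\<exists>y\<in>fst i. snd i < g i y)"
    using bchoice by meson
  have "I \<subseteq> \<B> \<times> \<rat>"
    unfolding I_def by auto
  then have "countable I"
    using \<open>countable \<B>\<close> countable_rat countable_SIGMA countable_subset by meson
  moreover have "\<forall>f\<in>S. f \<le> u" if u: "u \<in> cont_funs X" and ub: "\<forall>f\<in>g ` I. f \<le> u" for u
  proof
    fix f assume f: "f \<in> S"
    have "f x \<le> u x" if x: "x \<in> topspace X" for x
    proof (rule ccontr)
      assume "\<not> f x \<le> u x"
      then obtain q where q: "q \<in> \<rat>" "u x < q" "q < f x"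
        using Rats_dense_in_real by (meson not_le)
      define U where "U = {y \<in> topspace X. u y \<in> {..<q}} \<inter> {y \<in> topspace X. f y \<in> {q<..}}"
      have "openin X U"
        unfolding U_def using u f assms(2)
        by (intro openin_Int openin_continuous_map_preimage) (auto simp: cont_funs_def)
      then obtain V where V: "V \<in> \<B>" "x \<in> V" "V \<subseteq> U"
        using \<B>_base x q unfolding U_def by force
      then have "(V, q) \<in> I" using f q unfolding I_def U_def by auto
      then obtain y where "y \<in> V" "q < g (V, q) y" using g by fastforce
      moreover have "g (V, q) y \<le> u y" using ub \<open>(V, q) \<in> I\<close> by (auto simp: le_fun_def)
      ultimately show False using V unfolding U_def by auto
    qed
    then show "f \<le> u"
      using cont_funs_le_iff f u assms(2) by blast
  qed
  ultimately show thesis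
    using that[of "g ` I"] g by blast
qed

lemma second_countable_imp_countable_sup_property:
  assumes "second_countable X"
  shows "countable_sup_property (cont_funs X)"
  unfolding countable_sup_property_def
proof (intro allI impI)
  fix S s assume "S \<subseteq> cont_funs X \<and> S \<noteq> {}" and sup: "is_sup_in (cont_funs X) S s"
  then obtain T where "T \<subseteq> S" "countable T"
    and "\<And>u. u \<in> cont_funs X \<Longrightarrow> \<forall>f\<in>T. f \<le> u \<Longrightarrow> \<forall>f\<in>S. f \<le> u"
    using second_countable_countable_dominating_subset[OF assms] by blast
  then show "\<exists>T\<subseteq>S. countable T \<and> is_sup_in (cont_funs X) T s"
    using is_sup_in_subset[OF sup] by blast
qed

context Metric_space
begin

lemma separable_space_imp_second_countable:
  assumes "separable_space mtopology"
  shows "second_countable mtopology"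
proof -
  obtain C where "countable C" "C \<subseteq> M" and dense: "mtopology closure_of C = M"
    using assms unfolding separable_space_def by auto
  define \<B> where "\<B> = (\<lambda>(c, r). mball c r) ` (C \<times> \<rat>)"
  have "countable \<B>"
    unfolding \<B>_def using \<open>countable C\<close> countable_rat by (intro countable_image countable_SIGMA)
  moreover have "\<exists>V\<in>\<B>. x \<in> V \<and> V \<subseteq> U" if U: "openin mtopology U" and x: "x \<in> U" for U x
  proof -
    obtain \<epsilon> where "\<epsilon> > 0" "mball x \<epsilon> \<subseteq> U"
      using U x unfolding openin_mtopology by blast
    obtain r where r: "r \<in> \<rat>" "0 < r" "r < \<epsilon> / 2"
      using Rats_dense_in_real[of 0 "\<epsilon> / 2"] \<open>\<epsilon> > 0\<close> by auto
    have "x \<in> M" using U x openin_subset by fastforce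
    then obtain c where c: "c \<in> C" "c \<in> mball x r"
      using dense \<open>r > 0\<close> unfolding metric_closure_of by blast
    have "mball c r \<subseteq> mball x \<epsilon>"
    proof
      fix y assume "y \<in> mball c r"
      then have "d x y \<le> d x c + d c y" using c triangle by auto
      then show "y \<in> mball x \<epsilon>" using \<open>x \<in> M\<close> \<open>y \<in> mball c r\<close> c r by auto
    qed
    moreover have "x \<in> mball c r" using c by (auto simp: commute)
    ultimately show ?thesis
      using \<open>mball x \<epsilon> \<subseteq> U\<close> c r unfolding \<B>_def by blast
  qed
  moreover have "\<forall>V\<in>\<B>. openin mtopology V"
    unfolding \<B>_def by auto
  ultimately show ?thesis
    unfolding second_countable_def by blast
qed

lemma separable_space_if_countable_nets:
  assumes "\<And>e. e > 0 \<Longrightarrow> \<exists>C. countable C \<and> C \<subseteq> M \<and> (\<forall>p\<in>M. \<exists>c\<in>C. d c p < e)"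
  shows "separable_space mtopology"
proof -
  obtain C where C: "\<And>n. countable (C n) \<and> C n \<subseteq> M \<and> (\<forall>p\<in>M. \<exists>c\<in>C n. d c p < 1 / Suc n)"
    using assms[of "1 / Suc _"] by (metis of_nat_0_less_iff zero_less_Suc zero_less_divide_1_iff)
  have "x \<in> mtopology closure_of (\<Union>n. C n)" if "x \<in> M" for x
    unfolding metric_closure_of
  proof (intro CollectI conjI allI impI \<open>x \<in> M\<close>)
    fix r :: real assume "r > 0"
    then obtain n where "1 / Suc n < r"
      using nat_approx_posE by blast
    moreover obtain c where "c \<in> C n" "d c x < 1 / Suc n" using C \<open>x \<in> M\<close> by blast
    ultimately show "\<exists>y\<in>\<Union>n. C n. y \<in> mball x r"
      using C \<open>x \<in> M\<close> by (force simp: commute)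
  qed
  then have "mtopology closure_of (\<Union>n. C n) = M"
    using closure_of_subset_topspace by fastforce
  moreover have "countable (\<Union>n. C n)" "(\<Union>n. C n) \<subseteq> M"
    using C by auto
  ultimately show ?thesis
    unfolding separable_space_def by auto
qed

lemma continuous_map_dist_to:
  assumes "a \<in> M"
  shows "continuous_map mtopology euclideanreal (\<lambda>x. d x a)"
  using continuous_map_mdist[of mtopology "metric (M, d)" "\<lambda>x. x" "\<lambda>_. a"] assms by simp

definition bump :: "real \<Rightarrow> 'a \<Rightarrow> 'a \<Rightarrow> real" where
  "bump e a x = (if x \<in> M then max 0 (1 - d x a / e) else 0)"

lemma bump_in_cont_funs:
  assumes "a \<in> M"
  shows "bump e a \<in> cont_funs mtopology"
proof -
  have "continuous_map mtopology euclideanreal (\<lambda>x. max 0 (1 - d x a * inverse e))"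
    using continuous_map_dist_to[OF assms]
    by (intro continuous_intros) (simp_all add: continuous_map_real_mult_right_eq)
  moreover have "bump e a = (\<lambda>x. if x \<in> topspace mtopology then max 0 (1 - d x a * inverse e) else 0)"
    by (simp add: fun_eq_iff bump_def divide_inverse)
  ultimately show ?thesis
    by (metis restrict_in_cont_funs)
qed

lemma indicator_in_cont_funs: "indicator M \<in> cont_funs mtopology"
proof -
  have "(\<lambda>x. if x \<in> topspace mtopology then 1 else 0 :: real) \<in> cont_funs mtopology"
    by (rule restrict_in_cont_funs) simp
  then show ?thesis
    unfolding indicator_def of_bool_def by simp
qed

lemma bump_self: "a \<in> M \<Longrightarrow> bump e a a = 1"
  by (simp add: bump_def)

lemma bump_le_indicator: "e > 0 \<Longrightarrow> bump e a \<le> indicator M"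
  by (auto simp: bump_def le_fun_def indicator_def)

lemma is_sup_in_bumps:
  assumes "e > 0"
  shows "is_sup_in (cont_funs mtopology) (bump e ` M) (indicator M)"
  unfolding is_sup_in_def
proof (intro conjI ballI impI indicator_in_cont_funs)
  show "f \<le> indicator M" if "f \<in> bump e ` M" for f
    using that bump_le_indicator[OF assms] by auto
  fix u assume u: "u \<in> cont_funs mtopology" and "\<forall>f\<in>bump e ` M. f \<le> u"
  then have "bump e x x \<le> u x" if "x \<in> M" for x
    using that by (auto simp: le_fun_def)
  then show "indicator M \<le> u"
    using cont_funs_le_iff[OF indicator_in_cont_funs u] by (simp add: bump_self)
qed

lemma bump_add_bump_le:
  assumes "e > 0" "a \<in> M" "b \<in> M" "e \<le> d a b"
  shows "bump e a x + bump e b x \<le> 1"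
proof (cases "x \<in> M")
  case True
  then have "e \<le> d x a + d x b"
    using assms triangle[of a x b] by (simp add: commute)
  then have "(1 - d x a / e) + (1 - d x b / e) \<le> 1"
    using assms(1) by (simp add: field_simps) (metis distrib_left less_imp_le mult_left_mono)
  moreover have "1 - d x a / e \<le> 1" "1 - d x b / e \<le> 1"
    using assms(1) by auto
  ultimately show ?thesis
    using True by (simp add: bump_def)
qed (simp add: bump_def)

lemma countable_sup_property_imp_separable_space:
  assumes "countable_sup_property (cont_funs mtopology)"
  shows "separable_space mtopology"
proof (rule ccontr)
  assume "\<not> separable_space mtopology"
  then obtain e where "e > 0" and far: "\<And>C. countable C \<Longrightarrow> C \<subseteq> M \<Longrightarrow> \<exists>p\<in>M. \<forall>c\<in>C. e \<le> d c p"
    using separable_space_if_countable_nets by (meson not_less)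
  then have "M \<noteq> {}" by blast
  then obtain T where "T \<subseteq> bump e ` M" "countable T" and sup: "is_sup_in (cont_funs mtopology) T (indicator M)"
    using countable_sup_propertyD[OF assms _ _ is_sup_in_bumps[OF \<open>e > 0\<close>]] bump_in_cont_funs
    by blast
  then obtain C where "countable C" "C \<subseteq> M" "T = bump e ` C"
    using countable_subset_image by metis
  then obtain p where "p \<in> M" and p: "\<And>c. c \<in> C \<Longrightarrow> e \<le> d c p"
    using far[of C] by blast
  define u where "u = (\<lambda>x. indicator M x - bump e p x)"
  have "u \<in> cont_funs mtopology"
    using continuous_map_diff indicator_in_cont_funs bump_in_cont_funs[OF \<open>p \<in> M\<close>]
    unfolding u_def cont_funs_def by auto
  moreover have "bump e c x \<le> u x" if "c \<in> C" for c x
  proof (cases "x \<in> M")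
    case True
    then show ?thesis
      using bump_add_bump_le[OF \<open>e > 0\<close> _ \<open>p \<in> M\<close> p, of c x] that \<open>C \<subseteq> M\<close>
      by (auto simp: u_def)
  qed (simp add: u_def bump_def)
  then have "\<forall>f\<in>T. f \<le> u"
    using \<open>T = bump e ` C\<close> by (auto simp: le_fun_def)
  ultimately have "indicator M \<le> u"
    using sup unfolding is_sup_in_def by blast
  then show False
    using \<open>p \<in> M\<close> by (auto simp: u_def le_fun_def bump_self dest: spec[of _ p])
qed

end

theorem corollary4p9:
  fixes X :: "'a topology"
  assumes "metrizable_space X"
  shows "separable_space X \<longleftrightarrow> countable_sup_property (cont_funs X)"
proof -
  obtain M d where "Metric_space M d" and X: "X = Metric_space.mtopology M d"
    using assms unfolding metrizable_space_def by blast
  interpret Metric_space M d by fact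
  show ?thesis
    unfolding X
    using separable_space_imp_second_countable second_countable_imp_countable_sup_property
      countable_sup_property_imp_separable_space
    by blast
qed

end
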